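(* There exists a universal constant $C>0$ such that the following holds. Let $n\ge1$, let $f:\mathbb{R}^n\to[0,\infty)$ be an isotropic, log-concave function, let $v>0$, and let $g=f*\gamma_n[v]$. Then for every $x\in\mathbb{R}^n$ with $|x|\le10\sqrt n$, $$|\nabla\log g(x)|\le C\sqrt n/v.$$
   Context: For $v>0$, $\gamma_n[v](x)=(2\pi v)^{-n/2}\exp(-|x|^2/(2v))$ on $\mathbb{R}^n$, and $*$ denotes convolution. A function $f:\mathbb{R}^n\to[0,\infty)$ is log-concave if $f(\lambda x+(1-\lambda)y)\ge f(x)^\lambda f(y)^{1-\lambda}$ for all $x,y$ and $0<\lambda<1$; it is isotropic if it is the probability density of a random vector with zero mean and identity covariance matrix. *)

theory Defs
  imports "HOL-Analysis.Analysis"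
begin

text \<open>Points of R^n are represented as extensional functions nat => real with
  domain {..<n}, i.e. elements of the space of the product measure below.\<close>

definition Rn :: "nat \<Rightarrow> (nat \<Rightarrow> real) set" where
  "Rn n = (\<Pi>\<^sub>E i\<in>{..<n}. (UNIV :: real set))"

definition lebesgue_Rn :: "nat \<Rightarrow> (nat \<Rightarrow> real) measure" where
  "lebesgue_Rn n = (\<Pi>\<^sub>M i\<in>{..<n}. lborel)"

definition enorm :: "nat \<Rightarrow> (nat \<Rightarrow> real) \<Rightarrow> real" where
  "enorm n x = sqrt (\<Sum>i<n. (x i)\<^sup>2)"

definition einner :: "nat \<Rightarrow> (nat \<Rightarrow> real) \<Rightarrow> (nat \<Rightarrow> real) \<Rightarrow> real" where
  "einner n x y = (\<Sum>i<n. x i * y i)"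

definition vminus :: "nat \<Rightarrow> (nat \<Rightarrow> real) \<Rightarrow> (nat \<Rightarrow> real) \<Rightarrow> (nat \<Rightarrow> real)" where
  "vminus n x y = restrict (\<lambda>i. x i - y i) {..<n}"

definition vcomb :: "nat \<Rightarrow> real \<Rightarrow> (nat \<Rightarrow> real) \<Rightarrow> (nat \<Rightarrow> real) \<Rightarrow> (nat \<Rightarrow> real)" where
  "vcomb n l x y = restrict (\<lambda>i. l * x i + (1 - l) * y i) {..<n}"

definition gaussian :: "nat \<Rightarrow> real \<Rightarrow> (nat \<Rightarrow> real) \<Rightarrow> real" where
  "gaussian n v x = (2 * pi * v) powr (- real n / 2) * exp (- (enorm n x)\<^sup>2 / (2 * v))"

definition convolution :: "nat \<Rightarrow> ((nat \<Rightarrow> real) \<Rightarrow> real) \<Rightarrow> ((nat \<Rightarrow> real) \<Rightarrow> real)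
    \<Rightarrow> (nat \<Rightarrow> real) \<Rightarrow> real" where
  "convolution n f h x = (\<integral>y. f y * h (vminus n x y) \<partial>lebesgue_Rn n)"

definition log_concave :: "nat \<Rightarrow> ((nat \<Rightarrow> real) \<Rightarrow> real) \<Rightarrow> bool" where
  "log_concave n f \<longleftrightarrow> (\<forall>x\<in>Rn n. f x \<ge> 0) \<and>
     (\<forall>x\<in>Rn n. \<forall>y\<in>Rn n. \<forall>l::real. 0 < l \<and> l < 1 \<longrightarrow>
        f (vcomb n l x y) \<ge> f x powr l * f y powr (1 - l))"

definition isotropic :: "nat \<Rightarrow> ((nat \<Rightarrow> real) \<Rightarrow> real) \<Rightarrow> bool" where
  "isotropic n f \<longleftrightarrow>
     f \<in> borel_measurable (lebesgue_Rn n) \<and> (\<forall>x\<in>Rn n. f x \<ge> 0) \<and>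
     integrable (lebesgue_Rn n) f \<and> (\<integral>x. f x \<partial>lebesgue_Rn n) = 1 \<and>
     (\<forall>i<n. integrable (lebesgue_Rn n) (\<lambda>x. x i * f x) \<and>
            (\<integral>x. x i * f x \<partial>lebesgue_Rn n) = 0) \<and>
     (\<forall>i<n. \<forall>j<n. integrable (lebesgue_Rn n) (\<lambda>x. x i * x j * f x) \<and>
            (\<integral>x. x i * x j * f x \<partial>lebesgue_Rn n) = (if i = j then 1 else 0))"

definition has_gradient :: "nat \<Rightarrow> ((nat \<Rightarrow> real) \<Rightarrow> real) \<Rightarrow> (nat \<Rightarrow> real)
    \<Rightarrow> (nat \<Rightarrow> real) \<Rightarrow> bool" where
  "has_gradient n phi G x \<longleftrightarrow>
     (\<forall>e>0. \<exists>d>0. \<forall>y\<in>Rn n. enorm n (vminus n y x) < d \<longrightarrow>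
        \<bar>phi y - phi x - einner n G (vminus n y x)\<bar> \<le> e * enorm n (vminus n y x))"

end

theory Submission
  imports Defs
begin

text \<open>Write \<open>f * \<gamma>\<^sub>n[v] = (2 \<pi> v)\<^bsup>-n/2\<^esup> h\<close> with
  \<open>h(x) = \<integral> f(w) exp(-|w - x|\<^sup>2 / (2v)) dw\<close>. Then \<open>\<nabla> log h(x) = \<mu>(x) / v\<close>, where \<open>\<mu>(x)\<close> is
  the mean of \<open>w - x\<close> under the density proportional to \<open>f(w) exp(-|w - x|\<^sup>2 / (2v))\<close>:
  Jensen's inequality bounds \<open>h(z) / h(x)\<close> from below and a second-order bound on \<open>exp\<close>
  from above, with a remainder of order \<open>|z - x|\<^sup>2\<close>.
  By Cauchy-Schwarz, \<open>|\<mu>(x)|\<^sup>2\<close> is at most the tilted mean of \<open>|w - x|\<^sup>2\<close>. The tilting weight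
  is a decreasing function of \<open>|w - x|\<^sup>2\<close>, so by Chebyshev's integral inequality this is at
  most the untilted mean \<open>n + |x|\<^sup>2 \<le> 101 n\<close>.\<close>

definition sqdist :: "nat \<Rightarrow> (nat \<Rightarrow> real) \<Rightarrow> (nat \<Rightarrow> real) \<Rightarrow> real" where
  "sqdist n a w = (\<Sum>i<n. (w i - a i)\<^sup>2)"

lemma sqdist_nonneg: "0 \<le> sqdist n a w"
  by (simp add: sqdist_def sum_nonneg)

lemma enorm_nonneg: "0 \<le> enorm n x"
  by (simp add: enorm_def sum_nonneg)

lemma enorm_vminus_sq: "(enorm n (vminus n y x))\<^sup>2 = sqdist n x y"
  by (simp add: enorm_def vminus_def sqdist_def sum_nonneg)

lemma einner_vminus: "einner n G (vminus n y x) = (\<Sum>i<n. G i * (y i - x i))"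
  by (simp add: einner_def vminus_def)

lemma has_gradient_add_const:
  "has_gradient n (\<lambda>y. c + phi y) G x \<longleftrightarrow> has_gradient n phi G x"
  by (simp add: has_gradient_def)

lemma has_gradient_of_quadratic_remainder:
  assumes "\<And>y. y \<in> Rn n \<Longrightarrow> enorm n (vminus n y x) \<le> 1 \<Longrightarrow>
      \<bar>phi y - phi x - einner n G (vminus n y x)\<bar> \<le> K * (enorm n (vminus n y x))\<^sup>2"
  shows "has_gradient n phi G x"
  unfolding has_gradient_def
proof (intro allI impI)
  fix e :: real
  assume "e > 0"
  define K' where "K' = max K 0"
  define d where "d = min 1 (e / (K' + 1))"
  show "\<exists>d>0. \<forall>y\<in>Rn n. enorm n (vminus n y x) < d \<longrightarrow>
      \<bar>phi y - phi x - einner n G (vminus n y x)\<bar> \<le> e * enorm n (vminus n y x)"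
  proof (intro exI[of _ d] conjI ballI impI)
    show "d > 0"
      using \<open>e > 0\<close> by (simp add: d_def K'_def add_nonneg_pos)
    fix y
    assume y: "y \<in> Rn n" and close: "enorm n (vminus n y x) < d"
    define r where "r = enorm n (vminus n y x)"
    have "r \<ge> 0"
      by (simp add: r_def enorm_nonneg)
    have "K' * r \<le> K' * (e / (K' + 1))"
      using close by (intro mult_left_mono) (auto simp: r_def d_def K'_def)
    also have "\<dots> \<le> e"
      using \<open>e > 0\<close> by (simp add: K'_def field_simps)
    finally have "K' * r \<le> e" .
    have "\<bar>phi y - phi x - einner n G (vminus n y x)\<bar> \<le> K * r\<^sup>2"
      using assms[OF y] close by (simp add: r_def d_def)
    also have "\<dots> \<le> K' * r\<^sup>2"
      by (intro mult_right_mono) (auto simp: K'_def)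
    also have "\<dots> = (K' * r) * r"
      by (simp add: power2_eq_square)
    also have "\<dots> \<le> e * r"
      using \<open>K' * r \<le> e\<close> \<open>r \<ge> 0\<close> by (rule mult_right_mono)
    finally show "\<bar>phi y - phi x - einner n G (vminus n y x)\<bar> \<le> e * enorm n (vminus n y x)"
      by (simp add: r_def)
  qed
qed

lemma exp_le_second_order: "exp (s::real) \<le> 1 + s + s\<^sup>2 / 2 + s\<^sup>2 * exp s / 2"
proof (cases "s \<ge> 0")
  case True
  obtain t where t: "\<bar>t\<bar> \<le> \<bar>s\<bar>" "exp s = (\<Sum>m<2. s ^ m / fact m) + exp t / fact 2 * s ^ 2"
    using Maclaurin_exp_le[of s 2] by blast
  have "exp t * s\<^sup>2 \<le> exp s * s\<^sup>2"
    using t(1) True by (intro mult_right_mono) auto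
  moreover have "exp s = 1 + s + exp t * s\<^sup>2 / 2"
    using t(2) by (simp add: numeral_2_eq_2)
  moreover have "0 \<le> s\<^sup>2 / 2" "s\<^sup>2 * exp s / 2 = exp s * s\<^sup>2 / 2"
    by simp_all
  ultimately show ?thesis
    by linarith
next
  case False
  obtain t where t: "exp s = (\<Sum>m<3. s ^ m / fact m) + exp t / fact 3 * s ^ 3"
    using Maclaurin_exp_le[of s 3] by blast
  have "exp t / fact 3 * s ^ 3 \<le> 0"
    using False by (intro mult_nonneg_nonpos) (auto simp: power_le_zero_eq_numeral)
  moreover have "(\<Sum>m<3. s ^ m / fact m) = 1 + s + s\<^sup>2 / 2"
    by (simp add: numeral_3_eq_3 numeral_2_eq_2 lessThan_Suc fact_numeral)
  moreover have "0 \<le> s\<^sup>2 * exp s / 2"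
    by simp
  ultimately show ?thesis
    using t by linarith
qed

lemma integral_sq_mult_le:
  fixes M :: "'a measure" and \<rho> Y :: "'a \<Rightarrow> real"
  assumes "integrable M \<rho>" "\<And>w. w \<in> space M \<Longrightarrow> 0 \<le> \<rho> w" "0 < integral\<^sup>L M \<rho>"
    and "integrable M (\<lambda>w. Y w * \<rho> w)" "integrable M (\<lambda>w. (Y w)\<^sup>2 * \<rho> w)"
  shows "(\<integral>w. Y w * \<rho> w \<partial>M)\<^sup>2 \<le> integral\<^sup>L M \<rho> * (\<integral>w. (Y w)\<^sup>2 * \<rho> w \<partial>M)"
proof -
  define m where "m = integral\<^sup>L M \<rho>"
  define c where "c = (\<integral>w. Y w * \<rho> w \<partial>M) / m"
  have "0 \<le> (\<integral>w. (Y w - c)\<^sup>2 * \<rho> w \<partial>M)"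
    using assms(2) by (intro integral_nonneg_AE AE_I2) auto
  also have "\<dots> = (\<integral>w. (Y w)\<^sup>2 * \<rho> w - 2 * c * (Y w * \<rho> w) + c\<^sup>2 * \<rho> w \<partial>M)"
    by (intro Bochner_Integration.integral_cong) (auto simp: power2_eq_square algebra_simps)
  also have "\<dots> = (\<integral>w. (Y w)\<^sup>2 * \<rho> w \<partial>M) - c * (\<integral>w. Y w * \<rho> w \<partial>M)"
    using assms(1,3-5) by (simp add: m_def c_def power2_eq_square)
  finally show ?thesis
    using assms(3) by (simp add: c_def m_def power2_eq_square field_simps)
qed

lemma integral_mult_antimono_le:
  fixes M :: "'a measure" and \<rho> S :: "'a \<Rightarrow> real" and \<phi> :: "real \<Rightarrow> real"
  assumes "antimono \<phi>" "integrable M \<rho>" "\<And>w. w \<in> space M \<Longrightarrow> 0 \<le> \<rho> w" "integral\<^sup>L M \<rho> = 1"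
    and "integrable M (\<lambda>w. S w * \<rho> w)" "integrable M (\<lambda>w. \<phi> (S w) * \<rho> w)"
    and "integrable M (\<lambda>w. S w * \<phi> (S w) * \<rho> w)"
  shows "(\<integral>w. S w * \<phi> (S w) * \<rho> w \<partial>M) \<le> (\<integral>w. S w * \<rho> w \<partial>M) * (\<integral>w. \<phi> (S w) * \<rho> w \<partial>M)"
proof -
  define A where "A = (\<integral>w. S w * \<rho> w \<partial>M)"
  have opposite: "0 \<le> (A - S w) * (\<phi> (S w) - \<phi> A)" for w
    using \<open>antimono \<phi>\<close>
    by (cases "S w \<le> A") (auto simp: zero_le_mult_iff antimonoD)
  have "0 \<le> (\<integral>w. (A - S w) * (\<phi> (S w) - \<phi> A) * \<rho> w \<partial>M)"
    by (intro integral_nonneg_AE AE_I2 mult_nonneg_nonneg opposite assms(3))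
  also have "\<dots> = (\<integral>w. A * (\<phi> (S w) * \<rho> w) - S w * \<phi> (S w) * \<rho> w + \<phi> A * (S w * \<rho> w) - A * \<phi> A * \<rho> w \<partial>M)"
    by (intro Bochner_Integration.integral_cong) (auto simp: algebra_simps)
  also have "\<dots> = A * (\<integral>w. \<phi> (S w) * \<rho> w \<partial>M) - (\<integral>w. S w * \<phi> (S w) * \<rho> w \<partial>M)"
    using assms(2,4-7) by (simp add: A_def)
  finally show ?thesis
    by (simp add: A_def)
qed

lemma integral_exp_ge:
  fixes M :: "'a measure" and \<rho> \<phi> :: "'a \<Rightarrow> real"
  assumes "integrable M \<rho>" "\<And>w. w \<in> space M \<Longrightarrow> 0 \<le> \<rho> w"
    and "integrable M (\<lambda>w. \<phi> w * \<rho> w)" "integrable M (\<lambda>w. exp (\<phi> w) * \<rho> w)"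
    and "(\<integral>w. \<phi> w * \<rho> w \<partial>M) = c * integral\<^sup>L M \<rho>"
  shows "exp c * integral\<^sup>L M \<rho> \<le> (\<integral>w. exp (\<phi> w) * \<rho> w \<partial>M)"
proof -
  have "(\<integral>w. exp c * \<rho> w + exp c * (\<phi> w * \<rho> w) - exp c * c * \<rho> w \<partial>M) \<le> (\<integral>w. exp (\<phi> w) * \<rho> w \<partial>M)"
  proof (intro integral_mono_AE AE_I2)
    fix w
    assume "w \<in> space M"
    have "exp c * (1 + (\<phi> w - c)) \<le> exp (\<phi> w)"
      using exp_ge_add_one_self[of "\<phi> w - c"] by (simp add: exp_diff field_simps)
    then show "exp c * \<rho> w + exp c * (\<phi> w * \<rho> w) - exp c * c * \<rho> w \<le> exp (\<phi> w) * \<rho> w"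
      using assms(2)[OF \<open>w \<in> space M\<close>] mult_right_mono by (fastforce simp: algebra_simps)
  qed (use assms(1,3,4) in auto)
  then show ?thesis
    using assms(1,3,5) by simp
qed

locale gauss_smoothing =
  fixes n :: nat and f :: "(nat \<Rightarrow> real) \<Rightarrow> real" and v :: real
  assumes f_measurable [measurable]: "f \<in> borel_measurable (lebesgue_Rn n)"
    and f_nonneg: "\<And>w. w \<in> Rn n \<Longrightarrow> 0 \<le> f w"
    and f_integrable: "integrable (lebesgue_Rn n) f"
    and f_integral: "(\<integral>w. f w \<partial>lebesgue_Rn n) = 1"
    and first_moment_integrable: "\<And>i. i < n \<Longrightarrow> integrable (lebesgue_Rn n) (\<lambda>w. w i * f w)"
    and second_moment_integrable: "\<And>i. i < n \<Longrightarrow> integrable (lebesgue_Rn n) (\<lambda>w. w i * w i * f w)"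
    and v_pos: "0 < v"
begin

abbreviation M :: "(nat \<Rightarrow> real) measure" where
  "M \<equiv> lebesgue_Rn n"

lemma space_M: "space M = Rn n"
  by (simp add: lebesgue_Rn_def Rn_def space_PiM)

lemma component_measurable [measurable]: "i < n \<Longrightarrow> (\<lambda>w. w i) \<in> borel_measurable M"
  unfolding lebesgue_Rn_def using measurable_component_singleton[of i "{..<n}"] by simp

lemma sqdist_measurable [measurable]: "sqdist n a \<in> borel_measurable M"
  unfolding sqdist_def[abs_def] by (intro borel_measurable_sum) measurable

lemma integrable_shifted_moment: "i < n \<Longrightarrow> integrable M (\<lambda>w. (w i - c) * f w)"
proof -
  assume "i < n"
  then have "integrable M (\<lambda>w. w i * f w - c * f w)"
    using first_moment_integrable f_integrable by auto
  then show ?thesis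
    by (simp add: left_diff_distrib)
qed

lemma integrable_shifted_second_moment: "i < n \<Longrightarrow> integrable M (\<lambda>w. (w i - c)\<^sup>2 * f w)"
proof -
  assume "i < n"
  then have "integrable M (\<lambda>w. w i * w i * f w - 2 * c * (w i * f w) + c\<^sup>2 * f w)"
    using second_moment_integrable first_moment_integrable f_integrable by auto
  then show ?thesis
    by (simp add: power2_eq_square algebra_simps)
qed

lemma integrable_sqdist: "integrable M (\<lambda>w. sqdist n a w * f w)"
  unfolding sqdist_def sum_distrib_right
  by (intro Bochner_Integration.integrable_sum integrable_shifted_second_moment) simp

definition weight :: "(nat \<Rightarrow> real) \<Rightarrow> (nat \<Rightarrow> real) \<Rightarrow> real" where
  "weight a w = exp (- sqdist n a w / (2 * v))"

definition tilt :: "(nat \<Rightarrow> real) \<Rightarrow> (nat \<Rightarrow> real) \<Rightarrow> real" where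
  "tilt a w = f w * weight a w"

definition smooth :: "(nat \<Rightarrow> real) \<Rightarrow> real" where
  "smooth a = (\<integral>w. tilt a w \<partial>M)"

definition tilt_mean :: "(nat \<Rightarrow> real) \<Rightarrow> nat \<Rightarrow> real" where
  "tilt_mean a i = (\<integral>w. (w i - a i) * tilt a w \<partial>M) / smooth a"

lemma weight_measurable [measurable]: "weight a \<in> borel_measurable M"
  unfolding weight_def[abs_def] by measurable

lemma weight_pos: "0 < weight a w"
  by (simp add: weight_def)

lemma weight_le_one: "weight a w \<le> 1"
  using v_pos sqdist_nonneg[of n a w] by (simp add: weight_def divide_nonneg_pos)

lemma tilt_nonneg: "w \<in> space M \<Longrightarrow> 0 \<le> tilt a w"
  using f_nonneg weight_pos[of a w] by (simp add: tilt_def space_M)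

lemma tilt_le: "w \<in> space M \<Longrightarrow> tilt a w \<le> f w"
  using f_nonneg weight_le_one[of a w]
  by (simp add: tilt_def space_M mult_left_le)

lemma integrable_mult_tilt:
  assumes "integrable M (\<lambda>w. Q w * f w)"
  shows "integrable M (\<lambda>w. Q w * tilt a w)"
proof (rule Bochner_Integration.integrable_bound[OF assms])
  have "(\<lambda>w. Q w * f w * weight a w) \<in> borel_measurable M"
    using borel_measurable_integrable[OF assms] by measurable
  then show "(\<lambda>w. Q w * tilt a w) \<in> borel_measurable M"
    by (simp add: tilt_def mult.assoc)
  show "AE w in M. norm (Q w * tilt a w) \<le> norm (Q w * f w)"
    using tilt_nonneg tilt_le f_nonneg
    by (intro AE_I2) (auto simp: abs_mult space_M intro!: mult_left_mono)
qed

lemma integrable_tilt: "integrable M (tilt a)"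
  using integrable_mult_tilt[of "\<lambda>_. 1"] f_integrable by simp

lemma smooth_pos: "0 < smooth a"
proof -
  have nonneg: "AE w in M. 0 \<le> tilt a w"
    by (intro AE_I2 tilt_nonneg)
  have "smooth a \<noteq> 0"
  proof
    assume "smooth a = 0"
    then have "AE w in M. tilt a w = 0"
      using integral_nonneg_eq_0_iff_AE[OF integrable_tilt nonneg] by (simp add: smooth_def)
    then have "AE w in M. f w = 0"
      by eventually_elim (metis tilt_def mult_eq_0_iff weight_pos less_irrefl)
    then have "(\<integral>w. f w \<partial>M) = 0"
      by (simp add: integral_eq_zero_AE)
    then show False
      using f_integral by simp
  qed
  moreover have "0 \<le> smooth a"
    unfolding smooth_def using nonneg by (rule integral_nonneg_AE)
  ultimately show ?thesis
    by simp
qed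

lemma convolution_gaussian: 
  "convolution n f (gaussian n v) a = (2 * pi * v) powr (- real n / 2) * smooth a"
proof -
  have "convolution n f (gaussian n v) a = (\<integral>w. (2 * pi * v) powr (- real n / 2) * tilt a w \<partial>M)"
    unfolding convolution_def gaussian_def tilt_def weight_def enorm_vminus_sq
    by (simp add: sqdist_def power2_commute mult_ac)
  then show ?thesis
    by (simp add: smooth_def)
qed

lemma tilt_mean_sq_le: "(\<Sum>i<n. (tilt_mean a i)\<^sup>2) * smooth a \<le> (\<integral>w. sqdist n a w * tilt a w \<partial>M)"
proof -
  have "(tilt_mean a i)\<^sup>2 * smooth a \<le> (\<integral>w. (w i - a i)\<^sup>2 * tilt a w \<partial>M)" if "i < n" for i
  proof -
    have "(\<integral>w. (w i - a i) * tilt a w \<partial>M)\<^sup>2 \<le> smooth a * (\<integral>w. (w i - a i)\<^sup>2 * tilt a w \<partial>M)"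
      unfolding smooth_def using smooth_pos[of a] that
      by (intro integral_sq_mult_le integrable_tilt tilt_nonneg integrable_mult_tilt
          integrable_shifted_moment integrable_shifted_second_moment) (auto simp: smooth_def)
    then show ?thesis
      using smooth_pos[of a] by (simp add: tilt_mean_def power_divide field_simps power2_eq_square)
  qed
  then have "(\<Sum>i<n. (tilt_mean a i)\<^sup>2 * smooth a) \<le> (\<Sum>i<n. \<integral>w. (w i - a i)\<^sup>2 * tilt a w \<partial>M)"
    by (intro sum_mono) simp
  also have "\<dots> = (\<integral>w. sqdist n a w * tilt a w \<partial>M)"
    unfolding sqdist_def sum_distrib_right
    by (intro Bochner_Integration.integral_sum[symmetric] integrable_mult_tilt
        integrable_shifted_second_moment) simp
  finally show ?thesis
    by (simp add: sum_distrib_right)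
qed

lemma integral_sqdist_tilt_le:
  "(\<integral>w. sqdist n a w * tilt a w \<partial>M) \<le> (\<integral>w. sqdist n a w * f w \<partial>M) * smooth a"
proof -
  define \<phi> where "\<phi> t = exp (- t / (2 * v))" for t
  have "antimono \<phi>"
    using v_pos by (auto simp: \<phi>_def antimono_def divide_right_mono)
  have tilt_eq: "tilt a = (\<lambda>w. \<phi> (sqdist n a w) * f w)"
    by (simp add: tilt_def weight_def \<phi>_def fun_eq_iff)
  have "integrable M (\<lambda>w. \<phi> (sqdist n a w) * f w)"
    using integrable_tilt[of a] by (simp add: tilt_eq)
  moreover have "integrable M (\<lambda>w. sqdist n a w * \<phi> (sqdist n a w) * f w)"
    using integrable_mult_tilt[OF integrable_sqdist[of a], of a] by (simp add: tilt_eq mult.assoc)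
  ultimately have "(\<integral>w. sqdist n a w * \<phi> (sqdist n a w) * f w \<partial>M)
      \<le> (\<integral>w. sqdist n a w * f w \<partial>M) * (\<integral>w. \<phi> (sqdist n a w) * f w \<partial>M)"
    by (intro integral_mult_antimono_le \<open>antimono \<phi>\<close> f_integrable f_integral integrable_sqdist)
      (auto simp: f_nonneg space_M)
  then show ?thesis
    by (simp add: smooth_def tilt_eq mult.assoc)
qed

lemma sum_tilt_mean_sq_le: "(\<Sum>i<n. (tilt_mean a i)\<^sup>2) \<le> (\<integral>w. sqdist n a w * f w \<partial>M)"
proof -
  have "(\<Sum>i<n. (tilt_mean a i)\<^sup>2) * smooth a \<le> (\<integral>w. sqdist n a w * f w \<partial>M) * smooth a"
    using tilt_mean_sq_le integral_sqdist_tilt_le by (rule order_trans)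
  then show ?thesis
    using smooth_pos[of a] by simp
qed

definition shift_exponent :: "(nat \<Rightarrow> real) \<Rightarrow> (nat \<Rightarrow> real) \<Rightarrow> (nat \<Rightarrow> real) \<Rightarrow> real" where
  "shift_exponent x z w = (\<Sum>i<n. (z i - x i) * (w i - x i)) / v - sqdist n x z / (2 * v)"

definition mean_shift_exponent :: "(nat \<Rightarrow> real) \<Rightarrow> (nat \<Rightarrow> real) \<Rightarrow> real" where
  "mean_shift_exponent x z = (\<Sum>i<n. (z i - x i) * tilt_mean x i) / v - sqdist n x z / (2 * v)"

lemma tilt_shift: "tilt z w = exp (shift_exponent x z w) * tilt x w"
proof -
  define L where "L = (\<Sum>i<n. (z i - x i) * (w i - x i))"
  have "sqdist n z w = (\<Sum>i<n. (w i - x i)\<^sup>2 - 2 * ((z i - x i) * (w i - x i)) + (z i - x i)\<^sup>2)"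
    unfolding sqdist_def by (intro sum.cong) (auto simp: power2_eq_square algebra_simps)
  also have "\<dots> = sqdist n x w - 2 * L + sqdist n x z"
    by (simp add: L_def sqdist_def sum.distrib sum_subtractf sum_distrib_left)
  finally have "- sqdist n z w / (2 * v) = - (sqdist n x w - 2 * L + sqdist n x z) / (2 * v)"
    by simp
  also have "\<dots> = shift_exponent x z w + - sqdist n x w / (2 * v)"
    unfolding shift_exponent_def L_def[symmetric] using v_pos by (simp add: field_simps)
  finally show ?thesis
    by (simp add: tilt_def weight_def exp_diff exp_minus field_simps)
qed

lemma shift_exponent_tilt:
  "shift_exponent x z w * tilt x w
    = (\<Sum>i<n. (z i - x i) * ((w i - x i) * tilt x w)) / v - sqdist n x z / (2 * v) * tilt x w"
proof -
  have "(\<Sum>i<n. (z i - x i) * (w i - x i)) * tilt x w = (\<Sum>i<n. (z i - x i) * ((w i - x i) * tilt x w))"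
    by (simp add: sum_distrib_right mult.assoc)
  then show ?thesis
    by (simp add: shift_exponent_def left_diff_distrib)
qed

lemma integrable_linear_tilt: "integrable M (\<lambda>w. \<Sum>i<n. c i * ((w i - a i) * tilt a w))"
  by (intro Bochner_Integration.integrable_sum Bochner_Integration.integrable_mult_right
      integrable_mult_tilt integrable_shifted_moment) simp

lemma integrable_shift_exponent: "integrable M (\<lambda>w. shift_exponent x z w * tilt x w)"
  unfolding shift_exponent_tilt
  by (intro Bochner_Integration.integrable_diff Bochner_Integration.integrable_divide
      Bochner_Integration.integrable_mult_right integrable_linear_tilt integrable_tilt)

lemma integral_shift_exponent:
  "(\<integral>w. shift_exponent x z w * tilt x w \<partial>M) = mean_shift_exponent x z * smooth x"
proof -
  have "(\<integral>w. shift_exponent x z w * tilt x w \<partial>M)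
      = (\<Sum>i<n. (z i - x i) * (\<integral>w. (w i - x i) * tilt x w \<partial>M)) / v - sqdist n x z / (2 * v) * smooth x"
    unfolding shift_exponent_tilt smooth_def
    using integrable_linear_tilt[of "\<lambda>i. z i - x i" x] integrable_tilt[of x]
    by (simp add: Bochner_Integration.integral_sum integrable_mult_tilt integrable_shifted_moment)
  also have "\<dots> = mean_shift_exponent x z * smooth x"
  proof -
    have "(\<Sum>i<n. (z i - x i) * tilt_mean x i) * smooth x
        = (\<Sum>i<n. (z i - x i) * (\<integral>w. (w i - x i) * tilt x w \<partial>M))"
      using smooth_pos[of x] by (simp add: tilt_mean_def sum_distrib_right)
    then show ?thesis
      by (simp only: mean_shift_exponent_def left_diff_distrib times_divide_eq_left)
  qed
  finally show ?thesis .
qed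

lemma smooth_ge: "exp (mean_shift_exponent x z) * smooth x \<le> smooth z"
proof -
  have "exp (mean_shift_exponent x z) * smooth x \<le> (\<integral>w. exp (shift_exponent x z w) * tilt x w \<partial>M)"
    unfolding smooth_def
    using integrable_tilt[of z] integral_shift_exponent[of x z]
    by (intro integral_exp_ge integrable_tilt tilt_nonneg integrable_shift_exponent)
      (auto simp: smooth_def tilt_shift[symmetric])
  then show ?thesis
    by (simp add: smooth_def tilt_shift[symmetric])
qed

lemma shift_exponent_deviation_sq_le:
  "(shift_exponent x z w - mean_shift_exponent x z)\<^sup>2
    \<le> sqdist n x z / v\<^sup>2 * sqdist n (\<lambda>i. x i + tilt_mean x i) w"
proof -
  have "shift_exponent x z w - mean_shift_exponent x z = (\<Sum>i<n. (z i - x i) * (w i - (x i + tilt_mean x i))) / v"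
    by (simp add: shift_exponent_def mean_shift_exponent_def right_diff_distrib
        distrib_left sum.distrib sum_subtractf diff_divide_distrib add_divide_distrib)
  then show ?thesis
    using Cauchy_Schwarz_ineq_sum[of "\<lambda>i. z i - x i" "\<lambda>i. w i - (x i + tilt_mean x i)" "{..<n}"] v_pos
    by (simp add: sqdist_def power_divide divide_right_mono)
qed

lemma tilt_le_second_order:
  fixes x z w :: "nat \<Rightarrow> real"
  assumes "w \<in> space M"
  defines "a \<equiv> mean_shift_exponent x z"
    and "s \<equiv> shift_exponent x z w - mean_shift_exponent x z"
    and "K \<equiv> sqdist n x z / v\<^sup>2"
  shows "tilt z w \<le> exp a * ((1 + s) * tilt x w)
    + (exp a + 1) / 2 * K * (sqdist n (\<lambda>i. x i + tilt_mean x i) w * f w)"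
proof -
  define T where "T = sqdist n (\<lambda>i. x i + tilt_mean x i) w"
  have s_sq: "s\<^sup>2 \<le> K * T"
    unfolding s_def K_def T_def by (rule shift_exponent_deviation_sq_le)
  have tilt_x: "0 \<le> tilt x w" "tilt x w \<le> f w" and tilt_z: "0 \<le> tilt z w" "tilt z w \<le> f w"
    using tilt_nonneg tilt_le assms(1) by auto
  have tilt_shift': "tilt z w = exp a * exp s * tilt x w"
    by (simp add: tilt_shift[of z w x] a_def s_def flip: exp_add)
  have "tilt z w \<le> exp a * (1 + s + s\<^sup>2 / 2 + s\<^sup>2 * exp s / 2) * tilt x w"
    unfolding tilt_shift' using exp_le_second_order tilt_x by (intro mult_right_mono mult_left_mono) auto
  \<comment> \<open>The factor \<open>exp s\<close> of the remainder is absorbed into \<open>tilt z w \<le> f w\<close>,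
    so second moments of \<open>f\<close> suffice.\<close>
  also have "\<dots> = exp a * ((1 + s) * tilt x w) + exp a / 2 * (s\<^sup>2 * tilt x w) + 1 / 2 * (s\<^sup>2 * tilt z w)"
    by (simp add: tilt_shift' algebra_simps)
  also have "\<dots> \<le> exp a * ((1 + s) * tilt x w) + exp a / 2 * (K * T * f w) + 1 / 2 * (K * T * f w)"
  proof -
    have "0 \<le> K * T"
      using s_sq by (meson order_trans zero_le_power2)
    then have "s\<^sup>2 * tilt x w \<le> K * T * f w" "s\<^sup>2 * tilt z w \<le> K * T * f w"
      using s_sq tilt_x tilt_z by (auto intro: mult_mono)
    then show ?thesis
      by (intro add_mono mult_left_mono order_refl) auto
  qed
  also have "\<dots> = exp a * ((1 + s) * tilt x w) + (exp a + 1) / 2 * K * (T * f w)"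
    by (simp add: algebra_simps)
  finally show ?thesis
    by (simp add: T_def)
qed

lemma smooth_le:
  fixes x z :: "nat \<Rightarrow> real"
  defines "a \<equiv> mean_shift_exponent x z" and "K \<equiv> sqdist n x z / v\<^sup>2"
  shows "smooth z \<le> exp a * smooth x
    + (exp a + 1) / 2 * K * (\<integral>w. sqdist n (\<lambda>i. x i + tilt_mean x i) w * f w \<partial>M)"
proof -
  define T where "T w = sqdist n (\<lambda>i. x i + tilt_mean x i) w" for w
  have expand: "(1 + (shift_exponent x z w - a)) * tilt x w
      = tilt x w + shift_exponent x z w * tilt x w - a * tilt x w" for w
    by (simp add: algebra_simps)
  have "smooth z \<le> (\<integral>w. exp a * ((1 + (shift_exponent x z w - a)) * tilt x w)
      + (exp a + 1) / 2 * K * (T w * f w) \<partial>M)"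
    unfolding smooth_def expand
    by (intro integral_mono_AE AE_I2 tilt_le_second_order[where x = x and z = z, folded a_def K_def T_def, unfolded expand]
        integrable_tilt Bochner_Integration.integrable_add Bochner_Integration.integrable_diff
        Bochner_Integration.integrable_mult_right integrable_shift_exponent)
      (simp_all add: T_def integrable_sqdist)
  also have "\<dots> = exp a * smooth x + (exp a + 1) / 2 * K * (\<integral>w. T w * f w \<partial>M)"
    unfolding expand using integrable_sqdist integrable_tilt[of x] integrable_shift_exponent[of x z]
    by (simp add: integral_shift_exponent smooth_def T_def a_def)
  finally show ?thesis
    by (simp add: T_def)
qed

lemma neg_mean_shift_exponent_le:
  assumes "sqdist n x z \<le> 1"
  shows "- mean_shift_exponent x z \<le> (2 + (\<Sum>i<n. (tilt_mean x i)\<^sup>2)) / (2 * v)"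
proof -
  have "0 \<le> (\<Sum>i<n. (z i - x i + tilt_mean x i)\<^sup>2)"
    by (simp add: sum_nonneg)
  also have "\<dots> = (\<Sum>i<n. (z i - x i)\<^sup>2 + 2 * ((z i - x i) * tilt_mean x i) + (tilt_mean x i)\<^sup>2)"
    by (intro sum.cong) (auto simp: power2_eq_square algebra_simps)
  also have "\<dots> = sqdist n x z + 2 * (\<Sum>i<n. (z i - x i) * tilt_mean x i) + (\<Sum>i<n. (tilt_mean x i)\<^sup>2)"
    by (simp add: sqdist_def sum.distrib sum_distrib_left)
  finally have "sqdist n x z - 2 * (\<Sum>i<n. (z i - x i) * tilt_mean x i) \<le> 2 + (\<Sum>i<n. (tilt_mean x i)\<^sup>2)"
    using assms by linarith
  then have "(sqdist n x z - 2 * (\<Sum>i<n. (z i - x i) * tilt_mean x i)) / (2 * v)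
      \<le> (2 + (\<Sum>i<n. (tilt_mean x i)\<^sup>2)) / (2 * v)"
    using v_pos by (intro divide_right_mono) auto
  moreover have "- mean_shift_exponent x z = (sqdist n x z - 2 * (\<Sum>i<n. (z i - x i) * tilt_mean x i)) / (2 * v)"
    using v_pos by (simp add: mean_shift_exponent_def diff_divide_distrib)
  ultimately show ?thesis
    by simp
qed

lemma ln_smooth_ratio_ge: "mean_shift_exponent x z \<le> ln (smooth z) - ln (smooth x)"
proof -
  have "ln (exp (mean_shift_exponent x z) * smooth x) \<le> ln (smooth z)"
    using smooth_ge[of x z] smooth_pos[of x] smooth_pos[of z] by simp
  then show ?thesis
    using smooth_pos[of x] by (simp add: ln_mult)
qed

lemma spread_nonneg: "0 \<le> (\<integral>w. sqdist n b w * f w \<partial>M) / (2 * v\<^sup>2 * smooth x)"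
  using f_nonneg smooth_pos[of x] v_pos
  by (intro divide_nonneg_pos integral_nonneg_AE AE_I2 mult_nonneg_nonneg sqdist_nonneg)
    (auto simp: space_M)

lemma ln_smooth_ratio_le:
  fixes x z :: "nat \<Rightarrow> real"
  defines "a \<equiv> mean_shift_exponent x z"
    and "c \<equiv> (\<integral>w. sqdist n (\<lambda>i. x i + tilt_mean x i) w * f w \<partial>M) / (2 * v\<^sup>2 * smooth x)"
  shows "ln (smooth z) - ln (smooth x) \<le> a + (1 + exp (- a)) * c * sqdist n x z"
proof -
  define q where "q = (1 + exp (- a)) * c * sqdist n x z"
  have hx: "0 < smooth x"
    by (rule smooth_pos)
  have "0 \<le> q"
    unfolding q_def c_def using spread_nonneg sqdist_nonneg exp_gt_zero[of "- a"]
    by (intro mult_nonneg_nonneg) (auto intro: less_imp_le)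
  have "exp a * (1 + exp (- a)) = exp a + 1"
    by (simp add: distrib_left exp_minus_inverse)
  then have "exp a * smooth x * q
      = (exp a + 1) / 2 * (sqdist n x z / v\<^sup>2) * (\<integral>w. sqdist n (\<lambda>i. x i + tilt_mean x i) w * f w \<partial>M)"
    using hx by (simp add: q_def c_def)
  then have "smooth z \<le> exp a * smooth x * (1 + q)"
    using smooth_le[where x = x and z = z] by (simp add: a_def distrib_left)
  then have "ln (smooth z) \<le> ln (exp a * smooth x * (1 + q))"
    using smooth_pos[of z] \<open>0 \<le> q\<close> by simp
  also have "\<dots> = a + ln (smooth x) + ln (1 + q)"
    using hx \<open>0 \<le> q\<close> by (simp add: ln_mult)
  also have "\<dots> \<le> a + ln (smooth x) + q"
    using ln_add_one_self_le_self[OF \<open>0 \<le> q\<close>] by simp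
  finally show ?thesis
    by (simp add: q_def)
qed

lemma ln_smooth_remainder:
  "\<exists>K. \<forall>z. sqdist n x z \<le> 1 \<longrightarrow>
     \<bar>ln (smooth z) - ln (smooth x) - (\<Sum>i<n. tilt_mean x i / v * (z i - x i))\<bar> \<le> K * sqdist n x z"
proof -
  define c where "c = (\<integral>w. sqdist n (\<lambda>i. x i + tilt_mean x i) w * f w \<partial>M) / (2 * v\<^sup>2 * smooth x)"
  define E where "E = exp ((2 + (\<Sum>i<n. (tilt_mean x i)\<^sup>2)) / (2 * v))"
  have "0 \<le> c"
    unfolding c_def by (rule spread_nonneg)
  show ?thesis
  proof (intro exI[of _ "1 / (2 * v) + (1 + E) * c"] allI impI)
    fix z
    assume close: "sqdist n x z \<le> 1"
    define a where "a = mean_shift_exponent x z"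
    define D where "D = sqdist n x z"
    have "0 \<le> D"
      by (simp add: D_def sqdist_nonneg)
    have "exp (- a) \<le> E"
      using neg_mean_shift_exponent_le[OF close] by (simp add: E_def a_def)
    then have "(1 + exp (- a)) * c * D \<le> (1 + E) * c * D"
      using \<open>0 \<le> c\<close> \<open>0 \<le> D\<close> by (intro mult_right_mono) auto
    moreover have "0 \<le> (1 + E) * c * D"
      unfolding E_def using \<open>0 \<le> c\<close> \<open>0 \<le> D\<close> exp_gt_zero
      by (intro mult_nonneg_nonneg add_nonneg_nonneg) (auto intro: less_imp_le)
    moreover have "(\<Sum>i<n. tilt_mean x i / v * (z i - x i)) = a + D / (2 * v)"
      by (simp add: a_def D_def mean_shift_exponent_def sum_divide_distrib[symmetric] mult.commute)
    moreover have "(1 / (2 * v) + (1 + E) * c) * sqdist n x z = D / (2 * v) + (1 + E) * c * D"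
      by (simp add: D_def algebra_simps)
    moreover have "0 \<le> D / (2 * v)"
      using \<open>0 \<le> D\<close> v_pos by simp
    ultimately show "\<bar>ln (smooth z) - ln (smooth x) - (\<Sum>i<n. tilt_mean x i / v * (z i - x i))\<bar>
        \<le> (1 / (2 * v) + (1 + E) * c) * sqdist n x z"
      using ln_smooth_ratio_ge[of x z] ln_smooth_ratio_le[where x = x and z = z]
      by (simp only: abs_le_iff a_def D_def c_def) linarith
  qed
qed

lemma has_gradient_ln_smooth: "has_gradient n (\<lambda>y. ln (smooth y)) (\<lambda>i. tilt_mean x i / v) x"
proof -
  obtain K where K: "\<And>z. sqdist n x z \<le> 1 \<Longrightarrow>
      \<bar>ln (smooth z) - ln (smooth x) - (\<Sum>i<n. tilt_mean x i / v * (z i - x i))\<bar> \<le> K * sqdist n x z"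
    using ln_smooth_remainder by blast
  show ?thesis
  proof (rule has_gradient_of_quadratic_remainder)
    fix y
    assume "enorm n (vminus n y x) \<le> 1"
    then have "sqdist n x y \<le> 1"
      using enorm_nonneg[of n "vminus n y x"] by (metis enorm_vminus_sq power_le_one)
    then show "\<bar>ln (smooth y) - ln (smooth x) - einner n (\<lambda>i. tilt_mean x i / v) (vminus n y x)\<bar>
        \<le> K * (enorm n (vminus n y x))\<^sup>2"
      using K by (simp add: einner_vminus enorm_vminus_sq)
  qed
qed

lemma has_gradient_ln_convolution:
  "has_gradient n (\<lambda>y. ln (convolution n f (gaussian n v) y)) (\<lambda>i. tilt_mean x i / v) x"
proof -
  define c where "c = (2 * pi * v) powr (- real n / 2)"
  have "0 < c"
    using v_pos by (simp add: c_def)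
  then have "(\<lambda>y. ln (convolution n f (gaussian n v) y)) = (\<lambda>y. ln c + ln (smooth y))"
    unfolding convolution_gaussian c_def[symmetric] using smooth_pos by (simp add: ln_mult_pos)
  then show ?thesis
    by (simp only: has_gradient_add_const has_gradient_ln_smooth)
qed

end

lemma enorm_sq: "(enorm n u)\<^sup>2 = (\<Sum>i<n. (u i)\<^sup>2)"
  by (simp add: enorm_def sum_nonneg)

lemma enorm_divide: "0 < c \<Longrightarrow> enorm n (\<lambda>i. u i / c) = enorm n u / c"
  by (simp add: enorm_def power_divide sum_divide_distrib[symmetric] real_sqrt_divide)

lemma isotropic_gauss_smoothing: "isotropic n f \<Longrightarrow> 0 < v \<Longrightarrow> gauss_smoothing n f v"
  by unfold_locales (auto simp: isotropic_def)

lemma isotropic_integral_sqdist: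
  assumes "isotropic n f"
  shows "(\<integral>w. sqdist n a w * f w \<partial>lebesgue_Rn n) = real n + (enorm n a)\<^sup>2"
proof -
  let ?M = "lebesgue_Rn n"
  have f: "integrable ?M f" "(\<integral>w. f w \<partial>?M) = 1"
    and first: "\<And>i. i < n \<Longrightarrow> integrable ?M (\<lambda>w. w i * f w) \<and> (\<integral>w. w i * f w \<partial>?M) = 0"
    and second: "\<And>i. i < n \<Longrightarrow> integrable ?M (\<lambda>w. w i * w i * f w) \<and> (\<integral>w. w i * w i * f w \<partial>?M) = 1"
    using assms by (auto simp: isotropic_def)
  have "(\<integral>w. sqdist n a w * f w \<partial>?M)
      = (\<integral>w. (\<Sum>i<n. w i * w i * f w - 2 * a i * (w i * f w) + (a i)\<^sup>2 * f w) \<partial>?M)"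
    unfolding sqdist_def sum_distrib_right
    by (intro Bochner_Integration.integral_cong sum.cong refl) (simp add: power2_eq_square algebra_simps)
  also have "\<dots> = (\<Sum>i<n. \<integral>w. w i * w i * f w - 2 * a i * (w i * f w) + (a i)\<^sup>2 * f w \<partial>?M)"
    using f first second by (intro Bochner_Integration.integral_sum) auto
  also have "\<dots> = (\<Sum>i<n. 1 + (a i)\<^sup>2)"
    using f first second by (intro sum.cong) auto
  finally show ?thesis
    by (simp add: sum.distrib enorm_sq)
qed

theorem lemma2p7:
  shows "\<exists>C>0. \<forall>n::nat. \<forall>f v. n \<ge> 1 \<longrightarrow> log_concave n f \<longrightarrow> isotropic n f \<longrightarrow> v > 0 \<longrightarrow>
     (\<forall>x\<in>Rn n. enorm n x \<le> 10 * sqrt (real n) \<longrightarrow>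
        (\<exists>G. has_gradient n (\<lambda>y. ln (convolution n f (gaussian n v) y)) G x \<and>
             enorm n G \<le> C * sqrt (real n) / v))"
proof (intro exI[of _ 11] conjI allI impI ballI)
  fix n :: nat and f and v :: real and x
  assume iso: "isotropic n f" and "0 < v" and x_small: "enorm n x \<le> 10 * sqrt (real n)"
  interpret gauss_smoothing n f v
    using iso \<open>0 < v\<close> by (rule isotropic_gauss_smoothing)
  have "(enorm n x)\<^sup>2 \<le> 100 * real n"
    using power_mono[OF x_small enorm_nonneg, of 2] by (simp add: power_mult_distrib)
  then have "(enorm n (tilt_mean x))\<^sup>2 \<le> (11 * sqrt (real n))\<^sup>2"
    using sum_tilt_mean_sq_le[of x] isotropic_integral_sqdist[OF iso, of x]
    by (simp add: enorm_sq power_mult_distrib)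
  then have "enorm n (tilt_mean x) \<le> 11 * sqrt (real n)"
    by (rule power2_le_imp_le) simp
  then have "enorm n (\<lambda>i. tilt_mean x i / v) \<le> 11 * sqrt (real n) / v"
    using \<open>0 < v\<close> by (simp add: enorm_divide divide_right_mono)
  then show "\<exists>G. has_gradient n (\<lambda>y. ln (convolution n f (gaussian n v) y)) G x \<and>
      enorm n G \<le> 11 * sqrt (real n) / v"
    using has_gradient_ln_convolution by blast
qed simp

end
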